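(* Let $W_1,\dots,W_{15}$ be $15$ mutually unbiased weighing matrices of order $16$ and weight $9$. Let $Y\subset\mathbb{R}^{16}$ be the set of row vectors of $I_{16},\frac13W_1,\dots,\frac13W_{15}$ (so $|Y|=256$). Then the graph with vertex set $Y$ in which two distinct vectors are adjacent if and only if they are orthogonal is a strongly regular graph with parameters $(256,120,56,56)$.
   Context: A weighing matrix of order $n$ and weight $k$ is an $n\times n$ matrix $W$ with entries in $\{1,-1,0\}$ such that $WW^T=kI_n$. Two weighing matrices $W_1,W_2$ of order $n$ and weight $k$ are unbiased if $\frac{1}{\sqrt{k}}W_1W_2^T$ is also a weighing matrix of order $n$ and weight $k$; a set is mutually unbiased if any two distinct members are unbiased. A strongly regular graph with parameters $(v,k,\lambda,\mu)$ is a $k$-regular graph on $v$ vertices in which any two adjacent vertices have exactly $\lambda$ common neighbours and any two distinct non-adjacent vertices have exactly $\mu$ common neighbours. *)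

theory Defs
  imports "HOL-Analysis.Analysis" "HOL-Library.Numeral_Type"
begin

definition weighing_matrix :: "real^'n^'n \<Rightarrow> nat \<Rightarrow> bool" where
  "weighing_matrix W k \<longleftrightarrow>
     (\<forall>i j. W $ i $ j \<in> {1, -1, 0}) \<and> W ** transpose W = real k *\<^sub>R mat 1"

definition unbiased_weighing :: "real^'n^'n \<Rightarrow> real^'n^'n \<Rightarrow> nat \<Rightarrow> bool" where
  "unbiased_weighing W1 W2 k \<longleftrightarrow>
     weighing_matrix ((1 / sqrt (real k)) *\<^sub>R (W1 ** transpose W2)) k"

definition strongly_regular :: "'a set \<Rightarrow> ('a \<Rightarrow> 'a \<Rightarrow> bool) \<Rightarrow> nat \<Rightarrow> nat \<Rightarrow> nat \<Rightarrow> nat \<Rightarrow> bool" where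
  "strongly_regular V E v k l m \<longleftrightarrow>
     finite V \<and> card V = v \<and>
     (\<forall>x\<in>V. \<forall>y\<in>V. E x y \<longleftrightarrow> E y x) \<and> (\<forall>x\<in>V. \<not> E x x) \<and>
     (\<forall>x\<in>V. card {y\<in>V. E x y} = k) \<and>
     (\<forall>x\<in>V. \<forall>y\<in>V. x \<noteq> y \<and> E x y \<longrightarrow> card {z\<in>V. E x z \<and> E y z} = l) \<and>
     (\<forall>x\<in>V. \<forall>y\<in>V. x \<noteq> y \<and> \<not> E x y \<longrightarrow> card {z\<in>V. E x z \<and> E y z} = m)"

end

theory Submission
  imports Defs
begin

(*
  The 256 vectors are the rows of the sixteen orthogonal matrices I and W_i / 3, so they are
  unit vectors forming a tight frame of R^16 with frame bound 16, and the squared inner product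
  of two distinct ones is 0 or 1/9.  Together these facts evaluate the sum of all fourth powers
  of inner products and show that it attains the degree-4 Welch bound; in the equality case the
  fourth moment tensor of the vectors is a multiple of the isotropic tensor, i.e. they form a
  spherical 4-design.  Since the squared inner products take only the values 1, 0 and 1/9,
  orthogonality of two vectors is the polynomial 1 - 9 c^2 + 8 [p = q] in their inner product
  c, so degrees and numbers of common neighbours are sums of second and fourth moments of the
  frame, which the tight frame and design identities evaluate to 120 and 56.
*)

lemma sum_mult_delta:
  fixes a :: "'n::finite" and f :: "'n \<Rightarrow> real"
  shows "(\<Sum>b\<in>UNIV. f b * of_bool (a = b)) = f a"
    and "(\<Sum>b\<in>UNIV. f b * of_bool (b = a)) = f a"
  by simp_all

lemma sum_sum_mult_delta:
  fixes a :: "'n::finite" and g :: "'n \<Rightarrow> 'n \<Rightarrow> real"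
  shows "(\<Sum>b\<in>UNIV. \<Sum>c\<in>UNIV. g b c * of_bool (a = b)) = (\<Sum>c\<in>UNIV. g a c)"
    and "(\<Sum>b\<in>UNIV. \<Sum>c\<in>UNIV. g b c * of_bool (b = a)) = (\<Sum>c\<in>UNIV. g a c)"
  by (subst sum.swap, simp add: sum_mult_delta)+

lemma sum_swap4:
  "(\<Sum>a\<in>UNIV. \<Sum>b\<in>UNIV. \<Sum>c\<in>UNIV. \<Sum>e\<in>UNIV. \<Sum>p\<in>P. F a b c e p)
     = (\<Sum>p\<in>P. \<Sum>a\<in>UNIV. \<Sum>b\<in>UNIV. \<Sum>c\<in>UNIV. \<Sum>e\<in>UNIV. F a b c e p)"
  by (simp only: sum.swap[where B = P])

lemma sum_product4:
  fixes f g h l :: "'a \<Rightarrow> 'b::comm_semiring_0"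
  shows "sum f A * sum g B * sum h C * sum l E
     = (\<Sum>a\<in>A. \<Sum>b\<in>B. \<Sum>c\<in>C. \<Sum>e\<in>E. f a * g b * h c * l e)"
proof -
  have "sum f A * sum g B * sum h C * sum l E = (\<Sum>a\<in>A. \<Sum>b\<in>B. f a * g b) * (\<Sum>c\<in>C. \<Sum>e\<in>E. h c * l e)"
    by (subst mult.assoc) (simp only: sum_product)
  also have "\<dots> = (\<Sum>a\<in>A. \<Sum>b\<in>B. \<Sum>c\<in>C. \<Sum>e\<in>E. f a * g b * (h c * l e))"
    by (simp only: sum_distrib_right) (simp only: sum_distrib_left)
  finally show ?thesis by (simp only: mult.assoc)
qed

definition contract4 ::
    "('n::finite \<Rightarrow> 'n \<Rightarrow> 'n \<Rightarrow> 'n \<Rightarrow> real) \<Rightarrow> real^'n \<Rightarrow> real^'n \<Rightarrow> real^'n \<Rightarrow> real^'n \<Rightarrow> real" where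
  "contract4 T x y z w = (\<Sum>a\<in>UNIV. \<Sum>b\<in>UNIV. \<Sum>c\<in>UNIV. \<Sum>e\<in>UNIV. x$a * y$b * z$c * w$e * T a b c e)"

lemma contract4_scale: "contract4 (\<lambda>a b c e. k * T a b c e) x y z w = k * contract4 T x y z w"
  by (simp add: contract4_def sum_distrib_left mult_ac)

definition isotropic4 :: "'n::finite \<Rightarrow> 'n \<Rightarrow> 'n \<Rightarrow> 'n \<Rightarrow> real" where
  "isotropic4 a b c e =
     of_bool (a = b) * of_bool (c = e) + of_bool (a = c) * of_bool (b = e) + of_bool (b = c) * of_bool (a = e)"

lemma sum_mult_isotropic4:
  "(\<Sum>a\<in>UNIV. \<Sum>b\<in>UNIV. \<Sum>c\<in>UNIV. \<Sum>e\<in>UNIV. T a b c e * isotropic4 a b c e)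
     = (\<Sum>a\<in>UNIV. \<Sum>c\<in>UNIV. T a a c c) + (\<Sum>a\<in>UNIV. \<Sum>b\<in>UNIV. T a b a b)
       + (\<Sum>a\<in>UNIV. \<Sum>b\<in>UNIV. T a b b a)"
  unfolding isotropic4_def
  by (simp only: distrib_left sum.distrib mult.assoc[symmetric] sum_mult_delta sum_sum_mult_delta)

lemma contract4_isotropic4:
  "contract4 isotropic4 x y z w = (x \<bullet> y) * (z \<bullet> w) + (x \<bullet> z) * (y \<bullet> w) + (x \<bullet> w) * (y \<bullet> z)"
  unfolding contract4_def sum_mult_isotropic4 inner_vec_def inner_real_def sum_product
  by (simp add: mult_ac)

lemma sum_isotropic4_squared:
  "(\<Sum>a\<in>UNIV. \<Sum>b\<in>UNIV. \<Sum>c\<in>UNIV. \<Sum>e\<in>UNIV. isotropic4 (a :: 'n::finite) b c e * isotropic4 a b c e)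
     = 3 * CARD('n) * (CARD('n) + 2)"
proof -
  have diagonal: "isotropic4 a a c c = 1 + 2 * of_bool (a = c)" "isotropic4 a c a c = 1 + 2 * of_bool (a = c)"
    "isotropic4 a c c a = 1 + 2 * of_bool (a = c)" for a c :: 'n
    by (auto simp: isotropic4_def)
  show ?thesis
    unfolding sum_mult_isotropic4 diagonal by (simp add: sum.distrib algebra_simps)
qed

definition moment4 :: "'i set \<Rightarrow> ('i \<Rightarrow> real^'n::finite) \<Rightarrow> 'n \<Rightarrow> 'n \<Rightarrow> 'n \<Rightarrow> 'n \<Rightarrow> real" where
  "moment4 P v a b c e = (\<Sum>p\<in>P. v p $ a * v p $ b * v p $ c * v p $ e)"

lemma sum_mult_moment4:
  "(\<Sum>a\<in>UNIV. \<Sum>b\<in>UNIV. \<Sum>c\<in>UNIV. \<Sum>e\<in>UNIV. T a b c e * moment4 P v a b c e)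
     = (\<Sum>p\<in>P. contract4 T (v p) (v p) (v p) (v p))"
  unfolding moment4_def contract4_def sum_distrib_left sum_swap4
  by (simp add: mult_ac)

lemma contract4_moment4:
  "contract4 (moment4 P v) x y z w = (\<Sum>p\<in>P. (x \<bullet> v p) * (y \<bullet> v p) * (z \<bullet> v p) * (w \<bullet> v p))"
proof -
  have "contract4 (moment4 P v) x y z w = (\<Sum>p\<in>P. \<Sum>a\<in>UNIV. \<Sum>b\<in>UNIV. \<Sum>c\<in>UNIV. \<Sum>e\<in>UNIV.
          (x$a * v p$a) * (y$b * v p$b) * (z$c * v p$c) * (w$e * v p$e))"
    unfolding moment4_def contract4_def sum_distrib_left sum_swap4 by (simp add: mult_ac)
  then show ?thesis
    unfolding inner_vec_def inner_real_def sum_product4 .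
qed

lemma moment4_eq_isotropic4:
  fixes v :: "'i \<Rightarrow> real^'n::finite" and k :: real
  assumes unit: "\<And>p. p \<in> P \<Longrightarrow> v p \<bullet> v p = 1"
    and fourth_powers: "(\<Sum>p\<in>P. \<Sum>q\<in>P. (v p \<bullet> v q)^4) = 3 * k * card P"
    and card_eq: "k * (CARD('n) * (CARD('n) + 2)) = card P"
  shows "moment4 P v a b c e = k * isotropic4 a b c e"
proof -
  \<comment> \<open>The hypotheses make the squared Frobenius norm of the difference of the two tensors vanish.\<close>
  let ?S = "moment4 P v" and ?M = "isotropic4 :: 'n \<Rightarrow> _"
  let ?sum4 = "\<lambda>F. \<Sum>a\<in>UNIV. \<Sum>b\<in>UNIV. \<Sum>c\<in>UNIV. \<Sum>e\<in>UNIV. F a b c e :: real"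
  have "(\<Sum>q\<in>P. \<Sum>p\<in>P. (v q \<bullet> v p)^4) = (\<Sum>p\<in>P. \<Sum>q\<in>P. (v p \<bullet> v q)^4)"
    by (subst sum.swap) (simp add: inner_commute)
  then have moment4_squared: "?sum4 (\<lambda>a b c e. ?S a b c e * ?S a b c e) = 3 * k * card P"
    unfolding sum_mult_moment4 contract4_moment4 using fourth_powers
    by (simp add: power4_eq_xxxx mult.assoc)
  have isotropic4_moment4: "?sum4 (\<lambda>a b c e. ?M a b c e * ?S a b c e) = 3 * card P"
    unfolding sum_mult_moment4 contract4_isotropic4 using unit by simp
  have "?sum4 (\<lambda>a b c e. (?S a b c e - k * ?M a b c e)^2)
      = ?sum4 (\<lambda>a b c e. ?S a b c e * ?S a b c e) - 2 * k * ?sum4 (\<lambda>a b c e. ?M a b c e * ?S a b c e)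
        + k^2 * ?sum4 (\<lambda>a b c e. ?M a b c e * ?M a b c e)"
    by (simp add: power2_eq_square algebra_simps sum.distrib sum_subtractf sum_distrib_left)
  also have "\<dots> = 0"
    unfolding moment4_squared isotropic4_moment4 sum_isotropic4_squared of_nat_mult[of 3] card_eq[symmetric]
    by (simp add: algebra_simps power2_eq_square)
  finally have "(?S a b c e - k * ?M a b c e)^2 = 0"
    by (simp add: sum_nonneg_eq_0_iff sum_nonneg)
  then show ?thesis by simp
qed

lemma welch_equality_design_identity:
  fixes v :: "'i \<Rightarrow> real^'n::finite" and k :: real
  assumes "\<And>p. p \<in> P \<Longrightarrow> v p \<bullet> v p = 1"
    and "(\<Sum>p\<in>P. \<Sum>q\<in>P. (v p \<bullet> v q)^4) = 3 * k * card P"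
    and "k * (CARD('n) * (CARD('n) + 2)) = card P"
  shows "(\<Sum>p\<in>P. (x \<bullet> v p)^2 * (y \<bullet> v p)^2) = k * ((x \<bullet> x) * (y \<bullet> y) + 2 * (x \<bullet> y)^2)"
proof -
  have "(\<Sum>p\<in>P. (x \<bullet> v p)^2 * (y \<bullet> v p)^2) = contract4 (moment4 P v) x x y y"
    by (simp add: contract4_moment4 power2_eq_square mult_ac)
  also have "moment4 P v = (\<lambda>a b c e. k * isotropic4 a b c e)"
    using moment4_eq_isotropic4[OF assms] by (intro ext)
  also have "contract4 (\<lambda>a b c e. k * isotropic4 a b c e) x x y y = k * contract4 isotropic4 x x y y"
    by (rule contract4_scale)
  finally show ?thesis
    by (simp add: contract4_isotropic4 power2_eq_square inner_commute algebra_simps)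
qed

locale biangular_tight_frame =
  fixes P :: "'i set" and v :: "'i \<Rightarrow> real^'n::finite" and k A :: real
  assumes finite_P: "finite P"
    and unit: "p \<in> P \<Longrightarrow> v p \<bullet> v p = 1"
    and biangular: "p \<in> P \<Longrightarrow> q \<in> P \<Longrightarrow> p \<noteq> q \<Longrightarrow> (v p \<bullet> v q)^2 \<in> {0, 1/k}"
    and k_gt_1: "1 < k"
    and tight: "(\<Sum>q\<in>P. (x \<bullet> v q)^2) = A * (x \<bullet> x)"
begin

lemma inj_on_v: "inj_on v P"
proof (rule inj_onI)
  fix p q assume pq: "p \<in> P" "q \<in> P" "v p = v q"
  show "p = q"
  proof (rule ccontr)
    assume "p \<noteq> q"
    then have "(v p \<bullet> v q)^2 \<in> {0, 1/k}" using biangular pq by blast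
    then show False using unit[OF \<open>p \<in> P\<close>] pq(3) k_gt_1 by auto
  qed
qed

lemma power4_inner:
  assumes "p \<in> P" "q \<in> P"
  shows "(v p \<bullet> v q)^4 = (v p \<bullet> v q)^2 / k + (1 - 1/k) * of_bool (p = q)"
proof (cases "p = q")
  case True
  then show ?thesis using unit[OF assms(1)] k_gt_1 by (simp add: field_simps)
next
  case False
  have "(v p \<bullet> v q)^4 = ((v p \<bullet> v q)^2)^2" by simp
  then show ?thesis using biangular[OF assms False] False by (auto simp: power2_eq_square)
qed

lemma sum_power4_inner:
  assumes "p \<in> P"
  shows "(\<Sum>q\<in>P. (v p \<bullet> v q)^4) = (A - 1) / k + 1"
proof -
  have "(\<Sum>q\<in>P. (v p \<bullet> v q)^4) = (\<Sum>q\<in>P. (v p \<bullet> v q)^2) / k + (1 - 1/k)"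
    using assms finite_P by (simp add: power4_inner sum.distrib sum_divide_distrib)
  also have "\<dots> = (A - 1) / k + 1"
    using tight[of "v p"] unit[OF assms] k_gt_1 by (simp add: field_simps)
  finally show ?thesis .
qed

lemma sum_power2_inner_mult_power2_inner:
  assumes A_eq: "A = 2 * (k - 1)"
    and card_P: "k * card P = (k - 1) * (CARD('n) * (CARD('n) + 2))"
  shows "(\<Sum>q\<in>P. (x \<bullet> v q)^2 * (y \<bullet> v q)^2) = (k - 1) / k * ((x \<bullet> x) * (y \<bullet> y) + 2 * (x \<bullet> y)^2)"
proof (rule welch_equality_design_identity)
  show "v p \<bullet> v p = 1" if "p \<in> P" for p using unit that .
  have "(\<Sum>p\<in>P. \<Sum>q\<in>P. (v p \<bullet> v q)^4) = (\<Sum>p\<in>P. (A - 1) / k + 1)"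
    by (rule sum.cong) (simp_all add: sum_power4_inner)
  then show "(\<Sum>p\<in>P. \<Sum>q\<in>P. (v p \<bullet> v q)^4) = 3 * ((k - 1) / k) * card P"
    using A_eq k_gt_1 by (simp add: field_simps)
  show "(k - 1) / k * (CARD('n) * (CARD('n) + 2)) = card P"
    using card_P k_gt_1 by (simp add: field_simps)
qed

lemma orthogonal_indicator:
  assumes "p \<in> P" "q \<in> P"
  shows "of_bool (v p \<noteq> v q \<and> v p \<bullet> v q = 0) = 1 - k * (v p \<bullet> v q)^2 + (k - 1) * of_bool (p = q)"
proof (cases "p = q")
  case True
  then show ?thesis using unit[OF assms(1)] by simp
next
  case False
  then have "v p \<noteq> v q" using inj_on_v assms by (auto dest: inj_onD)
  then show ?thesis using biangular[OF assms False] False k_gt_1 by auto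
qed

lemma card_filter_image:
  "real (card {y \<in> v ` P. R y}) = (\<Sum>q\<in>P. of_bool (R (v q)))"
proof -
  have "{y \<in> v ` P. R y} = v ` {q \<in> P. R (v q)}" by auto
  then have "card {y \<in> v ` P. R y} = card {q \<in> P. R (v q)}"
    using card_image[OF inj_on_subset[OF inj_on_v]] by auto
  then show ?thesis using finite_P by (simp add: Int_def)
qed

lemma card_orthogonal_neighbours:
  assumes "p \<in> P"
  shows "real (card {y \<in> v ` P. v p \<noteq> y \<and> v p \<bullet> y = 0}) = card P - k * A + (k - 1)"
proof -
  have "real (card {y \<in> v ` P. v p \<noteq> y \<and> v p \<bullet> y = 0})
      = (\<Sum>q\<in>P. 1 - k * (v p \<bullet> v q)^2 + (k - 1) * of_bool (p = q))"
    unfolding card_filter_image using assms by (simp add: orthogonal_indicator)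
  also have "\<dots> = card P - k * (\<Sum>q\<in>P. (v p \<bullet> v q)^2) + (k - 1)"
    using assms finite_P by (simp add: sum.distrib sum_subtractf sum_distrib_left)
  finally show ?thesis using tight[of "v p"] unit[OF assms] by simp
qed

lemma card_common_orthogonal_neighbours:
  assumes A_eq: "A = 2 * (k - 1)"
    and card_P: "k * card P = (k - 1) * (CARD('n) * (CARD('n) + 2))"
    and p: "p \<in> P" and q: "q \<in> P" and "p \<noteq> q"
  shows "real (card {z \<in> v ` P. (v p \<noteq> z \<and> v p \<bullet> z = 0) \<and> (v q \<noteq> z \<and> v q \<bullet> z = 0)})
           = card P - (3 * k - 2) * (k - 1)"
proof -
  define a where "a r = (v p \<bullet> v r)^2" for r
  define b where "b r = (v q \<bullet> v r)^2" for r
  have "real (card {z \<in> v ` P. (v p \<noteq> z \<and> v p \<bullet> z = 0) \<and> (v q \<noteq> z \<and> v q \<bullet> z = 0)})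
      = (\<Sum>r\<in>P. (1 - k * a r + (k - 1) * of_bool (p = r)) * (1 - k * b r + (k - 1) * of_bool (q = r)))"
    unfolding card_filter_image a_def b_def using p q
    by (intro sum.cong refl) (subst of_bool_conj, simp only: orthogonal_indicator p q)
  also have "\<dots> = (\<Sum>r\<in>P. 1 - k * a r - k * b r + k^2 * (a r * b r)
                     + of_bool (p = r) * ((k - 1) * (1 - k * b r)) + of_bool (q = r) * ((k - 1) * (1 - k * a r)))"
    using \<open>p \<noteq> q\<close> by (intro sum.cong) (auto simp: algebra_simps power2_eq_square)
  also have "\<dots> = card P - k * (\<Sum>r\<in>P. a r) - k * (\<Sum>r\<in>P. b r) + k^2 * (\<Sum>r\<in>P. a r * b r)
                  + (k - 1) * (1 - k * b p) + (k - 1) * (1 - k * a q)"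
    using p q finite_P by (simp add: sum.distrib sum_subtractf sum_distrib_left)
  also have "\<dots> = card P - (3 * k - 2) * (k - 1)"
  proof -
    define c where "c = v p \<bullet> v q"
    have sums: "(\<Sum>r\<in>P. a r) = A" "(\<Sum>r\<in>P. b r) = A"
      using tight[of "v p"] tight[of "v q"] unit[OF p] unit[OF q] by (simp_all add: a_def b_def)
    have sum_ab: "(\<Sum>r\<in>P. a r * b r) = (k - 1) / k * (1 + 2 * c^2)"
      using sum_power2_inner_mult_power2_inner[OF A_eq card_P, of "v p" "v q"] unit[OF p] unit[OF q]
      by (simp add: a_def b_def c_def)
    have a_q_b_p: "a q = c^2" "b p = c^2" by (simp_all add: a_def b_def c_def inner_commute)
    show ?thesis
      unfolding sums sum_ab a_q_b_p A_eq using k_gt_1 by (simp add: field_simps power2_eq_square)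
  qed
  finally show ?thesis .
qed

(* The first two hypotheses make the frame a spherical 4-design with constant (k - 1) / k, which
   is exactly what makes the number of common neighbours independent of adjacency. *)
theorem strongly_regular_orthogonality_graph:
  assumes A_eq: "A = 2 * (k - 1)"
    and card_P: "k * card P = (k - 1) * (CARD('n) * (CARD('n) + 2))"
    and degree: "real d = card P - (2 * k - 1) * (k - 1)"
    and common: "real l = card P - (3 * k - 2) * (k - 1)"
  shows "strongly_regular (v ` P) (\<lambda>x y. x \<noteq> y \<and> x \<bullet> y = 0) (card P) d l l"
proof -
  have "card {z \<in> v ` P. (x \<noteq> z \<and> x \<bullet> z = 0) \<and> (y \<noteq> z \<and> y \<bullet> z = 0)} = l"
    if "x \<in> v ` P" "y \<in> v ` P" "x \<noteq> y" for x y
    using that card_common_orthogonal_neighbours[OF A_eq card_P] common by fastforce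
  moreover have "card {y \<in> v ` P. x \<noteq> y \<and> x \<bullet> y = 0} = d" if "x \<in> v ` P" for x
    using that card_orthogonal_neighbours degree A_eq by (fastforce simp: algebra_simps)
  ultimately show ?thesis
    using finite_P inj_on_v
    by (auto simp: strongly_regular_def card_image inner_commute)
qed

end

lemma matrix_mult_transpose_component:
  "((A :: real^'n::finite^'m) ** transpose B) $ r $ s = A $ r \<bullet> B $ s"
  by (simp add: matrix_matrix_mult_def transpose_def inner_vec_def)

lemma inner_rows_orthogonal_matrix:
  "orthogonal_matrix (Q :: real^'n::finite^'n) \<Longrightarrow> Q $ r \<bullet> Q $ s = of_bool (r = s)"
  by (simp add: orthogonal_matrix_def matrix_mult_transpose_component[symmetric] mat_def)

lemma inner_mat1_row: "(mat 1 :: real^'n::finite^'n) $ r \<bullet> u = u $ r"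
proof -
  have "(mat 1 :: real^'n^'n) $ r = axis r 1" by (simp add: vec_eq_iff mat_def axis_def)
  then show ?thesis by (simp add: inner_axis')
qed

lemma sum_power2_inner_rows_orthogonal_matrix:
  fixes B :: "real^'n::finite^'n"
  assumes "orthogonal_matrix B"
  shows "(\<Sum>r\<in>UNIV. (x \<bullet> B $ r)^2) = x \<bullet> x"
proof -
  have "orthogonal_transformation ((*v) B)"
    using assms by (simp add: orthogonal_transformation_matrix matrix_vector_mul_linear)
  then have "(B *v x) \<bullet> (B *v x) = x \<bullet> x"
    by (simp add: orthogonal_transformation_def)
  then show ?thesis
    unfolding inner_vec_def[of "B *v x"] matrix_vector_mul_component
    by (simp add: inner_commute power2_eq_square)
qed

lemma weighing_matrix_entry_square: "weighing_matrix W k \<Longrightarrow> (W $ r $ s)^2 \<in> {0, 1}"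
  unfolding weighing_matrix_def by (metis empty_iff insert_iff power2_minus power_one zero_power2)

lemma unbiased_weighing_inner_rows:
  assumes "unbiased_weighing W1 W2 k" "0 < k"
  shows "(W1 $ r \<bullet> W2 $ s)^2 \<in> {0, real k}"
proof -
  have "((1 / sqrt (real k)) *\<^sub>R (W1 ** transpose W2)) $ r $ s \<in> {1, -1, 0}"
    using assms(1) unfolding unbiased_weighing_def weighing_matrix_def by blast
  then have "(W1 $ r \<bullet> W2 $ s / sqrt (real k))^2 \<in> {0, 1}"
    by (auto simp: matrix_mult_transpose_component divide_inverse mult.commute)
  then show ?thesis
    using assms(2) by (auto simp: power_divide)
qed

definition scaled_basis :: "nat \<Rightarrow> (nat \<Rightarrow> real^'n^'n) \<Rightarrow> nat \<Rightarrow> real^'n^'n" where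
  "scaled_basis k W i = (if i = 0 then mat 1 else (1 / sqrt (real k)) *\<^sub>R W i)"

lemma orthogonal_matrix_scaled_basis:
  fixes W :: "nat \<Rightarrow> real^'n::finite^'n"
  assumes "i \<noteq> 0 \<Longrightarrow> weighing_matrix (W i) k" "0 < k"
  shows "orthogonal_matrix (scaled_basis k W i)"
proof (cases "i = 0")
  case True
  then show ?thesis by (simp add: scaled_basis_def orthogonal_matrix_id)
next
  case False
  have "W i ** transpose (W i) = real k *\<^sub>R mat 1"
    using assms(1)[OF False] by (simp add: weighing_matrix_def)
  then have "scaled_basis k W i ** transpose (scaled_basis k W i) = mat 1"
    using False assms(2) by (simp add: scaled_basis_def transpose_scalar matrix_scalar_ac flip: scalar_matrix_assoc)
  then show ?thesis
    using orthogonal_matrix[of "transpose (scaled_basis k W i)"] by simp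
qed

lemma inner_rows_scaled_basis_square:
  fixes W :: "nat \<Rightarrow> real^'n::finite^'n"
  assumes wm: "\<And>l. l \<in> {i, j} \<Longrightarrow> l \<noteq> 0 \<Longrightarrow> weighing_matrix (W l) k"
    and mu: "i \<noteq> 0 \<Longrightarrow> j \<noteq> 0 \<Longrightarrow> unbiased_weighing (W i) (W j) k"
    and "0 < k" and "i \<noteq> j"
  shows "(scaled_basis k W i $ r \<bullet> scaled_basis k W j $ s)^2 \<in> {0, 1 / real k}"
proof -
  have identity_case: "(mat 1 $ r \<bullet> scaled_basis k W l $ s)^2 \<in> {0, 1 / real k}"
    if "l \<in> {i, j}" "l \<noteq> 0" for l r s
  proof -
    have "mat 1 $ r \<bullet> scaled_basis k W l $ s = W l $ s $ r / sqrt (real k)"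
      using that by (simp add: scaled_basis_def inner_mat1_row)
    then show ?thesis
      using weighing_matrix_entry_square[OF wm[OF that], of s r] \<open>0 < k\<close>
      by (auto simp: power_divide)
  qed
  consider "i = 0" | "j = 0" | "i \<noteq> 0" "j \<noteq> 0" by blast
  then show ?thesis
  proof cases
    case 1
    then show ?thesis using identity_case[of j r s] \<open>i \<noteq> j\<close> by (simp add: scaled_basis_def)
  next
    case 2
    then show ?thesis using identity_case[of i s r] \<open>i \<noteq> j\<close>
      by (simp add: scaled_basis_def inner_commute)
  next
    case 3
    then have "(scaled_basis k W i $ r \<bullet> scaled_basis k W j $ s)^2 = (W i $ r \<bullet> W j $ s)^2 / real k ^ 2"
      by (simp add: scaled_basis_def power_mult_distrib power_divide)
    then show ?thesis
      using unbiased_weighing_inner_rows[OF mu[OF 3] \<open>0 < k\<close>, of r s] \<open>0 < k\<close>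
      by (auto simp: power2_eq_square)
  qed
qed

lemma biangular_tight_frame_scaled_bases:
  fixes W :: "nat \<Rightarrow> real^'n::finite^'n" and k m :: nat
  assumes "1 < k"
    and wm: "\<And>i. i \<in> {1..m} \<Longrightarrow> weighing_matrix (W i) k"
    and mu: "\<And>i j. i \<in> {1..m} \<Longrightarrow> j \<in> {1..m} \<Longrightarrow> i \<noteq> j \<Longrightarrow> unbiased_weighing (W i) (W j) k"
  shows "biangular_tight_frame ({0..m} \<times> UNIV) (\<lambda>(i, r). scaled_basis k W i $ r) (real k) (real m + 1)"
proof
  have orth: "orthogonal_matrix (scaled_basis k W i)" if "i \<in> {0..m}" for i
    using that \<open>1 < k\<close> by (intro orthogonal_matrix_scaled_basis wm) auto
  show "finite ({0..m} \<times> (UNIV :: 'n set))" by simp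
  show "1 < real k" using \<open>1 < k\<close> by simp
  show "(case p of (i, r) \<Rightarrow> scaled_basis k W i $ r) \<bullet> (case p of (i, r) \<Rightarrow> scaled_basis k W i $ r) = 1"
    if "p \<in> {0..m} \<times> UNIV" for p
    using that orth by (auto simp: inner_rows_orthogonal_matrix)
  show "((case p of (i, r) \<Rightarrow> scaled_basis k W i $ r) \<bullet> (case q of (i, r) \<Rightarrow> scaled_basis k W i $ r))^2
          \<in> {0, 1 / real k}"
    if pq: "p \<in> {0..m} \<times> UNIV" "q \<in> {0..m} \<times> UNIV" "p \<noteq> q" for p q
  proof (cases "fst p = fst q")
    case True
    then show ?thesis using pq orth by (auto simp: inner_rows_orthogonal_matrix)
  next
    case False
    obtain i r j s where "p = (i, r)" "q = (j, s)" "i \<in> {0..m}" "j \<in> {0..m}"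
      using pq(1,2) by (cases p, cases q) auto
    moreover have "(scaled_basis k W i $ r \<bullet> scaled_basis k W j $ s)^2 \<in> {0, 1 / real k}"
      if "i \<in> {0..m}" "j \<in> {0..m}" "i \<noteq> j"
      using that \<open>1 < k\<close> by (intro inner_rows_scaled_basis_square wm mu) auto
    ultimately show ?thesis using False by simp
  qed
  show "(\<Sum>q\<in>{0..m} \<times> UNIV. (x \<bullet> (case q of (i, r) \<Rightarrow> scaled_basis k W i $ r))^2) = (real m + 1) * (x \<bullet> x)"
    for x
  proof -
    have "(\<Sum>q\<in>{0..m} \<times> UNIV. (x \<bullet> (case q of (i, r) \<Rightarrow> scaled_basis k W i $ r))^2)
        = (\<Sum>i\<in>{0..m}. \<Sum>r\<in>UNIV. (x \<bullet> scaled_basis k W i $ r)^2)"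
      by (simp add: sum.cartesian_product case_prod_beta)
    also have "\<dots> = (\<Sum>i\<in>{0..m}. x \<bullet> x)"
      using orth by (simp add: sum_power2_inner_rows_orthogonal_matrix)
    finally show ?thesis by simp
  qed
qed

lemma image_scaled_bases:
  fixes W :: "nat \<Rightarrow> real^'n::finite^'n"
  shows "(\<lambda>(i, r). scaled_basis k W i $ r) ` ({0..m} \<times> UNIV)
     = {mat 1 $ r | r. True} \<union> {(1 / sqrt (real k)) *\<^sub>R (W i $ r) | i r. i \<in> {1..m}}"
  (is "?f ` _ = ?Y")
proof
  show "?Y \<subseteq> ?f ` ({0..m} \<times> UNIV)"
    by (auto simp: scaled_basis_def intro!: rev_image_eqI)
  show "?f ` ({0..m} \<times> UNIV) \<subseteq> ?Y"
  proof (rule image_subsetI)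
    fix p :: "nat \<times> 'n" assume "p \<in> {0..m} \<times> UNIV"
    then show "?f p \<in> ?Y" by (cases p, cases "fst p = 0") (auto simp: scaled_basis_def)
  qed
qed

theorem mainTheorem13:
  fixes W :: "nat \<Rightarrow> real^16^16"
  assumes wm: "\<And>i. i \<in> {1..15} \<Longrightarrow> weighing_matrix (W i) 9"
    and mu: "\<And>i j. i \<in> {1..15} \<Longrightarrow> j \<in> {1..15} \<Longrightarrow> i \<noteq> j \<Longrightarrow> unbiased_weighing (W i) (W j) 9"
  defines "Y \<equiv> {(mat 1 :: real^16^16) $ r | r. True} \<union> {(1/3) *\<^sub>R (W i $ r) | i r. i \<in> {1..15}}"
  shows "card Y = 256 \<and> strongly_regular Y (\<lambda>x y. x \<noteq> y \<and> x \<bullet> y = 0) 256 120 56 56"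
proof -
  define P where "P = {0..15::nat} \<times> (UNIV :: 16 set)"
  define v where "v = (\<lambda>(i, r). scaled_basis 9 W i $ r)"
  interpret biangular_tight_frame P v 9 16
    using biangular_tight_frame_scaled_bases[of 9 15 W] wm mu unfolding P_def v_def by simp
  have "sqrt (real 9) = 3" by (rule real_sqrt_unique) auto
  then have Y_eq: "Y = v ` P"
    unfolding Y_def P_def v_def image_scaled_bases by simp
  have card_P: "card P = 256" by (simp add: P_def card_cartesian_product)
  have "strongly_regular Y (\<lambda>x y. x \<noteq> y \<and> x \<bullet> y = 0) 256 120 56 56"
    using strongly_regular_orthogonality_graph[of 120 56] card_P unfolding Y_eq by simp
  moreover have "card Y = 256" using card_image[OF inj_on_v] card_P Y_eq by simp
  ultimately show ?thesis by simp
qed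

end
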